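(* Assume the data-collection setting described in the context, and that Assumptions (A1) (sequential conditional exogeneity) and (A2) (linear blip) hold. Then for every episode $i\in\{1,\dots,n\}$ and every stage $j\in\{1,\dots,l\}$, \[ \mathbb{E}_{i-1}\Big[\Big(y_i-\sum_{j'=j}^l\theta_{j'}^T\phi_{j'}(X_{i,1:j'},T_{i,1:j'})\Big)\Big(\phi_j(X_{i,1:j},T_{i,1:j})-\mathbb{E}_{i,j-1}[\phi_j(X_{i,1:j},T_{i,1:j})]\Big)\Big]=0 . \]
   Context: Data: $n$ episodes of horizon $l$ are collected sequentially. Episode $i$ yields $Z_i=(X_{i,1},T_{i,1},\dots,X_{i,l},T_{i,l},y_i)$ with contexts $X_{i,j}\in\mathcal{X}$, treatments $T_{i,j}\in\mathcal{T}$ (where $\mathcal{T}$ contains a distinguished "no treatment" value $0$) and final outcome $y_i\in\mathcal{Y}\subset\mathbb{R}$. $X_{i,1}$ is drawn i.i.d. across episodes from a fixed distribution $P_X$; within episode $i$, $T_{i,j}$ is drawn by a known behavior policy $\pi_i$ based on $(X_{i,1:j},T_{i,1:j-1})$, and $\pi_i$ may depend on $Z_{1:i-1}$. Let $\mathcal{F}_{i-1}=\sigma(Z_{1:i-1})$ and $\mathcal{F}_{i,j-1}=\sigma(Z_{1:i-1},X_{i,1:j},T_{i,1:j-1})$, with $\mathcal{F}_{i,-1}=\mathcal{F}_{i-1}$; write $\mathbb{E}_{i-1}[\cdot]=\mathbb{E}[\cdot\mid\mathcal{F}_{i-1}]$ and $\mathbb{E}_{i,j-1}[\cdot]=\mathbb{E}[\cdot\mid\mathcal{F}_{i,j-1}]$.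 For a static treatment sequence $\tau_{1:l}$, $y(\tau_{1:l})$ denotes the potential outcome; the observed outcome is $y=y(T_{1:l})$. The following hold within every episode (conditionally on earlier episodes), with the same parameters across episodes. (A1) Sequential conditional exogeneity: for each $j=1,\dots,l$, $\{y(T_{1:j-1},\tau_{j:l}):\tau_{j:l}\in\mathcal{T}^{l-j+1}\}$ is independent of $T_j$ given $(T_{1:j-1},X_{1:j})$. The blip function is $\gamma_j(X_{1:j},T_{1:j}):=\mathbb{E}[y(T_{1:j},0_{j+1:l})-y(T_{1:j-1},0_{j:l})\mid X_{1:j},T_{1:j}]$. (A2) Linear blip: $\gamma_j(X_{1:j},T_{1:j})=\theta_j^T\phi_j(X_{1:j},T_{1:j})$ for unknown $\theta_j\in\mathbb{R}^d$ and known $\phi_j:\mathcal{X}^j\times\mathcal{T}^j\to\mathbb{R}^d$ with $\phi_j(x_{1:j},(\tau_{1:j-1},0))=\mathbf{0}$ for all $x_{1:j},\tau_{1:j-1}$. *)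

theory Defs
  imports "HOL-Probability.Probability"
begin

text \<open>Episodes are indexed 1..n, stages 1..l.  X i k, T i k : context / treatment of episode i at stage k.
  Y i tau : potential outcome of episode i under the static treatment sequence tau (only tau_1..tau_l
  matter; we always pass the restriction of tau to {1..l}).\<close>

definition splice :: "nat \<Rightarrow> (nat \<Rightarrow> 't) \<Rightarrow> (nat \<Rightarrow> 't) \<Rightarrow> nat \<Rightarrow> 't" where
  "splice j a b = (\<lambda>k. if k < j then a k else b k)"

text \<open>pot l Y T i j tau  is the random variable y_i(T_{i,1:j-1}, tau_{j:l}).\<close>
definition pot :: "nat \<Rightarrow> (nat \<Rightarrow> (nat \<Rightarrow> 't) \<Rightarrow> 'a \<Rightarrow> real) \<Rightarrow> (nat \<Rightarrow> nat \<Rightarrow> 'a \<Rightarrow> 't)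
    \<Rightarrow> nat \<Rightarrow> nat \<Rightarrow> (nat \<Rightarrow> 't) \<Rightarrow> 'a \<Rightarrow> real" where
  "pot l Y T i j tau = (\<lambda>\<omega>. Y i (restrict (splice j (\<lambda>k. T i k \<omega>) tau) {1..l}) \<omega>)"

text \<open>Observed outcome y_i = y_i(T_{i,1:l}) (consistency).\<close>
definition obs :: "nat \<Rightarrow> (nat \<Rightarrow> (nat \<Rightarrow> 't) \<Rightarrow> 'a \<Rightarrow> real) \<Rightarrow> (nat \<Rightarrow> nat \<Rightarrow> 'a \<Rightarrow> 't)
    \<Rightarrow> nat \<Rightarrow> 'a \<Rightarrow> real" where
  "obs l Y T i = (\<lambda>\<omega>. Y i (restrict (\<lambda>k. T i k \<omega>) {1..l}) \<omega>)"

definition phiv :: "(nat \<Rightarrow> (nat \<Rightarrow> 'x) \<Rightarrow> (nat \<Rightarrow> 't) \<Rightarrow> 'v) \<Rightarrow> nat \<Rightarrow> (nat \<Rightarrow> 'x) \<Rightarrow> (nat \<Rightarrow> 't) \<Rightarrow> 'v" where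
  "phiv \<phi> j x tau = \<phi> j (restrict x {1..j}) (restrict tau {1..j})"

definition hist :: "'a measure \<Rightarrow> 'x measure \<Rightarrow> 't measure \<Rightarrow> (nat \<Rightarrow> nat \<Rightarrow> 'a \<Rightarrow> 'x)
    \<Rightarrow> (nat \<Rightarrow> nat \<Rightarrow> 'a \<Rightarrow> 't) \<Rightarrow> (nat \<Rightarrow> 'a \<Rightarrow> real)
    \<Rightarrow> (nat \<times> nat) set \<Rightarrow> (nat \<times> nat) set \<Rightarrow> nat set \<Rightarrow> 'a measure" where
  "hist M SX ST X T y IX IT Iy = sigma (space M)
     ({X i k -` A \<inter> space M | i k A. (i, k) \<in> IX \<and> A \<in> sets SX}
    \<union> {T i k -` A \<inter> space M | i k A. (i, k) \<in> IT \<and> A \<in> sets ST}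
    \<union> {y i -` A \<inter> space M | i A. i \<in> Iy \<and> A \<in> sets (borel :: real measure)})"

definition past_idx :: "nat \<Rightarrow> nat \<Rightarrow> (nat \<times> nat) set" where
  "past_idx l i = {(i', k). 1 \<le> i' \<and> i' < i \<and> 1 \<le> k \<and> k \<le> l}"

text \<open>F_{i-1} = sigma(Z_{1:i-1}).\<close>
definition Fep where
  "Fep M SX ST X T y l i = hist M SX ST X T y (past_idx l i) (past_idx l i) {1..<i}"

text \<open>F_{i,j-1} = sigma(Z_{1:i-1}, X_{i,1:j}, T_{i,1:j-1}).\<close>
definition Fst where
  "Fst M SX ST X T y l i j = hist M SX ST X T y
     (past_idx l i \<union> {(i, k) | k. 1 \<le> k \<and> k \<le> j})
     (past_idx l i \<union> {(i, k) | k. 1 \<le> k \<and> k < j}) {1..<i}"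

text \<open>sigma(Z_{1:i-1}, X_{i,1:j}, T_{i,1:j}): the conditioning information of the blip function
  (within episode i, conditionally on earlier episodes).\<close>
definition Gst where
  "Gst M SX ST X T y l i j = hist M SX ST X T y
     (past_idx l i \<union> {(i, k) | k. 1 \<le> k \<and> k \<le> j})
     (past_idx l i \<union> {(i, k) | k. 1 \<le> k \<and> k \<le> j}) {1..<i}"

definition cond_indep :: "'a measure \<Rightarrow> 'a measure \<Rightarrow> 'a set set \<Rightarrow> 'a set set \<Rightarrow> bool" where
  "cond_indep M G A B \<longleftrightarrow> (\<forall>a\<in>A. \<forall>b\<in>B. AE \<omega> in M.
      real_cond_exp M G (indicator (a \<inter> b)) \<omega>
        = real_cond_exp M G (indicator a) \<omega> * real_cond_exp M G (indicator b) \<omega>)"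

end

(*
  Write p_k = y_i(T_{i,1:k-1}, 0_{k:l}) for the outcome when treatment stops before stage k,
  so that p_{l+1} = y_i, and gamma_k = theta_k^T phi_k.  Then

    y_i - sum_{k=j..l} gamma_k = p_j + sum_{k=j..l} (p_{k+1} - p_k - gamma_k),

  and it suffices to show that every summand is orthogonal to 1_B psi for each B in F_{i-1},
  where psi = phi_j - E[phi_j | F_{i,j-1}].  For k >= j the function 1_B psi is measurable
  with respect to sigma(Z_{1:i-1}, X_{i,1:k}, T_{i,1:k}), and given this sigma-algebra the
  increment p_{k+1} - p_k has mean gamma_k by the linear blip assumption (A2).  The term p_j is
  handled by sequential exogeneity (A1): p_j is conditionally independent of T_{i,j} given
  F_{i,j-1}, so conditioning p_j on F_{i,j-1} v sigma(T_{i,j}) gives the same result as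
  conditioning on F_{i,j-1}; as phi_j is measurable with respect to the larger sigma-algebra,
  phi_j and E[phi_j | F_{i,j-1}] then have the same correlation with p_j on every set of F_{i,j-1}.

  Conditional independence of sets is lifted to this statement about conditional expectations
  by a Dynkin argument over the pi-system of intersections, followed by an L^1-approximation of
  p_j by simple functions.  Square integrability makes all products integrable.
*)
theory Submission
  imports Defs
begin

lemma prob_space_subalgebra_is_sigma_finite:
  "prob_space M \<Longrightarrow> subalgebra M F \<Longrightarrow> sigma_finite_subalgebra M F"
  by (simp add: finite_measure_subalgebra.intro finite_measure_subalgebra_axioms.intro
      finite_measure_subalgebra_is_sigma_finite prob_space.axioms(1))

lemma subalgebra_trans: "subalgebra M F \<Longrightarrow> subalgebra F G \<Longrightarrow> subalgebra M G"
  by (auto simp: subalgebra_def)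

lemma integrable_real_indicator_mult:
  "A \<in> sets M \<Longrightarrow> integrable M f \<Longrightarrow> integrable M (\<lambda>x. indicator A x * f x :: real)"
  using integrable_mult_indicator[of A M f] by simp

lemma (in finite_measure) integrable_indicator_real [simp]:
  "A \<in> sets M \<Longrightarrow> integrable M (indicator A :: 'a \<Rightarrow> real)"
  by (simp add: integrable_indicator_iff less_top[symmetric])

section \<open>Square-integrable functions\<close>

definition square_integrable :: "'a measure \<Rightarrow> ('a \<Rightarrow> real) \<Rightarrow> bool" where
  "square_integrable M f \<longleftrightarrow> f \<in> borel_measurable M \<and> integrable M (\<lambda>x. (f x)\<^sup>2)"

lemma abs_mult_le_sum_squares: "\<bar>a * b\<bar> \<le> a\<^sup>2 + (b::real)\<^sup>2"
proof -
  have "2 * (\<bar>a\<bar> * \<bar>b\<bar>) \<le> a\<^sup>2 + b\<^sup>2"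
    using sum_squares_bound[of "\<bar>a\<bar>" "\<bar>b\<bar>"] by simp
  moreover have "0 \<le> \<bar>a\<bar> * \<bar>b\<bar>" by simp
  ultimately show ?thesis unfolding abs_mult by linarith
qed

lemma integrable_mult_square_integrable:
  assumes "square_integrable M f" "square_integrable M g"
  shows "integrable M (\<lambda>x. f x * g x)"
  by (rule Bochner_Integration.integrable_bound[where f="\<lambda>x. (f x)\<^sup>2 + (g x)\<^sup>2"])
    (use assms abs_mult_le_sum_squares in \<open>auto simp: square_integrable_def\<close>)

lemma square_integrable_add:
  assumes "square_integrable M f" "square_integrable M g"
  shows "square_integrable M (\<lambda>x. f x + g x)"
proof -
  have "integrable M (\<lambda>x. (f x)\<^sup>2 + (g x)\<^sup>2 + 2 * (f x * g x))"
    using assms integrable_mult_square_integrable[OF assms] by (auto simp: square_integrable_def)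
  then show ?thesis
    using assms by (auto simp: square_integrable_def power2_sum mult.assoc)
qed

lemma square_integrable_cmult:
  "square_integrable M f \<Longrightarrow> square_integrable M (\<lambda>x. c * f x)"
  by (auto simp: square_integrable_def power_mult_distrib)

lemma square_integrable_diff:
  assumes "square_integrable M f" "square_integrable M g"
  shows "square_integrable M (\<lambda>x. f x - g x)"
  using square_integrable_add[OF assms(1) square_integrable_cmult[OF assms(2), of "-1"]] by simp

lemma square_integrable_sum:
  "(\<And>k. k \<in> I \<Longrightarrow> square_integrable M (f k)) \<Longrightarrow> square_integrable M (\<lambda>x. \<Sum>k\<in>I. f k x)"
proof (induction I rule: infinite_finite_induct)
  case (insert k I)
  then show ?case by (simp add: square_integrable_add)
qed (simp_all add: square_integrable_def)

lemma square_integrable_inner: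
  fixes f :: "'a \<Rightarrow> real ^ 'd"
  assumes "\<And>c. square_integrable M (\<lambda>x. f x $ c)"
  shows "square_integrable M (\<lambda>x. \<theta> \<bullet> f x)"
  unfolding inner_vec_def inner_real_def by (intro square_integrable_sum square_integrable_cmult assms)

lemma square_integrable_mult_indicator:
  assumes "square_integrable M f" "B \<in> sets M"
  shows "square_integrable M (\<lambda>x. indicator B x * f x)"
proof -
  have "(\<lambda>x. (indicator B x * f x)\<^sup>2) = (\<lambda>x. indicator B x * (f x)\<^sup>2)"
    by (simp add: fun_eq_iff split: split_indicator)
  then show ?thesis
    using assms integrable_mult_indicator[of B M "\<lambda>x. (f x)\<^sup>2"] by (auto simp: square_integrable_def)
qed

lemma (in finite_measure) square_integrable_integrable:
  "square_integrable M f \<Longrightarrow> integrable M f"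
  by (simp add: square_integrable_def square_integrable_imp_integrable)

context sigma_finite_subalgebra
begin

lemma square_integrable_real_cond_exp:
  assumes "integrable M f" "square_integrable M f"
  shows "square_integrable M (real_cond_exp M F f)"
  using integrable_convex_cond_exp[where I=UNIV and q="\<lambda>y. y\<^sup>2", OF assms(1)] assms(2)
  by (simp add: square_integrable_def convex_power2)

end

section \<open>Conditional independence and joins of sigma-algebras\<close>

lemma subalgebra_sigma:
  assumes "A \<subseteq> sets M"
  shows "subalgebra M (sigma (space M) A)"
proof -
  have "A \<subseteq> Pow (space M)"
    using assms sets.sets_into_space by blast
  then show ?thesis
    using sets.sigma_sets_subset[OF assms] by (simp add: subalgebra_def sets_measure_of)
qed

lemma subalgebra_sigma_mono:
  assumes "A \<subseteq> B" "B \<subseteq> Pow \<Omega>"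
  shows "subalgebra (sigma \<Omega> B) (sigma \<Omega> A)"
proof -
  have "A \<subseteq> Pow \<Omega>" using assms by blast
  then show ?thesis
    using assms sigma_sets_mono'[OF assms(1)] by (simp add: subalgebra_def sets_measure_of)
qed

lemma measurable_sigma_vimages:
  assumes f: "f \<in> M \<rightarrow>\<^sub>M N"
    and A: "{f -` B \<inter> space M | B. B \<in> sets N} \<subseteq> A" "A \<subseteq> Pow (space M)"
  shows "f \<in> sigma (space M) A \<rightarrow>\<^sub>M N"
proof (rule measurableI)
  show "f x \<in> space N" if "x \<in> space (sigma (space M) A)" for x
    using that measurable_space[OF f] by (simp add: space_measure_of_conv)
  show "f -` B \<inter> space (sigma (space M) A) \<in> sets (sigma (space M) A)" if "B \<in> sets N" for B
    using that A by (auto simp: sets_measure_of)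
qed

lemma Int_stable_join_generators: "Int_stable {a \<inter> b | a b. a \<in> sets F \<and> b \<in> sets G}"
proof (rule Int_stableI)
  fix x y assume "x \<in> {a \<inter> b | a b. a \<in> sets F \<and> b \<in> sets G}" "y \<in> {a \<inter> b | a b. a \<in> sets F \<and> b \<in> sets G}"
  then obtain a b a' b' where "x = a \<inter> b" "y = a' \<inter> b'" "a \<in> sets F" "a' \<in> sets F" "b \<in> sets G" "b' \<in> sets G"
    by blast
  then show "x \<inter> y \<in> {a \<inter> b | a b. a \<in> sets F \<and> b \<in> sets G}"
    by (intro CollectI exI[of _ "a \<inter> a'"] exI[of _ "b \<inter> b'"]) auto
qed

definition join_algebra :: "'a measure \<Rightarrow> 'a measure \<Rightarrow> 'a measure \<Rightarrow> 'a measure" where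
  "join_algebra M F G = sigma (space M) {a \<inter> b | a b. a \<in> sets F \<and> b \<in> sets G}"

context
  fixes M F G :: "'a measure"
  assumes F: "subalgebra M F" and G: "subalgebra M G"
begin

lemma join_generators_sets: "{a \<inter> b | a b. a \<in> sets F \<and> b \<in> sets G} \<subseteq> sets M"
  using F G by (auto simp: subalgebra_def)

lemma sets_join_algebra:
  "sets (join_algebra M F G) = sigma_sets (space M) {a \<inter> b | a b. a \<in> sets F \<and> b \<in> sets G}"
  unfolding join_algebra_def
  by (rule sets_measure_of[OF order_trans[OF join_generators_sets sets.space_closed]])

lemma subalgebra_join_algebra: "subalgebra M (join_algebra M F G)"
  unfolding join_algebra_def by (rule subalgebra_sigma[OF join_generators_sets])

lemma subalgebra_join_algebra_left: "subalgebra (join_algebra M F G) F"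
proof -
  have "a \<in> sets (join_algebra M F G)" if "a \<in> sets F" for a
  proof -
    have "a \<inter> space G \<in> {a \<inter> b | a b. a \<in> sets F \<and> b \<in> sets G}"
      using that by blast
    moreover have "a \<inter> space G = a"
      using sets.sets_into_space[OF that] F G by (auto simp: subalgebra_def)
    ultimately show ?thesis unfolding sets_join_algebra by auto
  qed
  then show ?thesis
    using F subalgebra_join_algebra by (auto simp: subalgebra_def)
qed

lemma subalgebra_join_algebra_right: "subalgebra (join_algebra M F G) G"
proof -
  have "b \<in> sets (join_algebra M F G)" if "b \<in> sets G" for b
  proof -
    have "space F \<inter> b \<in> {a \<inter> b | a b. a \<in> sets F \<and> b \<in> sets G}"
      using that by blast
    moreover have "space F \<inter> b = b"
      using sets.sets_into_space[OF that] F G by (auto simp: subalgebra_def)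
    ultimately show ?thesis unfolding sets_join_algebra by auto
  qed
  then show ?thesis
    using G subalgebra_join_algebra by (auto simp: subalgebra_def)
qed

end

lemma set_integral_eq_on_sigma_sets:
  fixes f g :: "'a \<Rightarrow> real"
  assumes S: "Int_stable S" "S \<subseteq> sets M"
    and f: "integrable M f" and g: "integrable M g"
    and space: "(\<integral>x. f x \<partial>M) = (\<integral>x. g x \<partial>M)"
    and basic: "\<And>c. c \<in> S \<Longrightarrow> (LINT x:c|M. f x) = (LINT x:c|M. g x)"
    and c: "c \<in> sigma_sets (space M) S"
  shows "(LINT x:c|M. f x) = (LINT x:c|M. g x)"
proof -
  have S_Pow: "S \<subseteq> Pow (space M)"
    using S(2) sets.sets_into_space by blast
  have sigma_sets_M: "sigma_sets (space M) S \<subseteq> sets M"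
    using S(2) sets.sigma_sets_subset by blast
  have integral_Diff: "(LINT x:space M - c|M. h x) = (\<integral>x. h x \<partial>M) - (LINT x:c|M. h x)"
    if "integrable M h" "c \<in> sets M" for h :: "'a \<Rightarrow> real" and c
  proof -
    have "c \<union> (space M - c) = space M"
      using sets.sets_into_space[OF that(2)] by blast
    then have "(\<integral>x. h x \<partial>M) = (LINT x:c \<union> (space M - c)|M. h x)"
      using set_integral_space[OF that(1)] by simp
    also have "\<dots> = (LINT x:c|M. h x) + (LINT x:space M - c|M. h x)"
      using that by (intro set_integral_Un) (auto simp: set_integrable_def integrable_real_indicator_mult)
    finally show ?thesis by simp
  qed
  have integral_Union: "(LINT x:(\<Union>i. A i)|M. h x) = (\<Sum>i. LINT x:A i|M. h x)"
    if "integrable M h" "disjoint_family A" "range A \<subseteq> sets M" for h :: "'a \<Rightarrow> real" and A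
    using that by (intro lebesgue_integral_countable_add)
      (auto simp: disjoint_family_on_def set_integrable_def integrable_real_indicator_mult)
  show ?thesis
    using S(1) S_Pow c
  proof (induction rule: sigma_sets_induct_disjoint)
    case (compl c)
    then have "c \<in> sets M" using sigma_sets_M by blast
    then show ?case using integral_Diff[OF f] integral_Diff[OF g] compl(2) space by simp
  next
    case (union A)
    then have "range A \<subseteq> sets M" using sigma_sets_M by blast
    then show ?case
      using integral_Union[OF f union(1)] integral_Union[OF g union(1)] union(3) by simp
  qed (simp_all add: basic set_lebesgue_integral_def[of M "{}"])
qed

lemma integral_abs_diff_tendsto_0:
  fixes s :: "nat \<Rightarrow> 'a \<Rightarrow> real"
  assumes s: "\<And>i. integrable M (s i)" and g: "integrable M g"
    and lim: "\<And>x. x \<in> space M \<Longrightarrow> (\<lambda>i. s i x) \<longlonglongrightarrow> g x"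
    and bound: "\<And>i x. x \<in> space M \<Longrightarrow> \<bar>s i x\<bar> \<le> 2 * \<bar>g x\<bar>"
  shows "(\<lambda>i. \<integral>x. \<bar>s i x - g x\<bar> \<partial>M) \<longlonglongrightarrow> 0"
proof -
  have "(\<lambda>i. \<integral>x. \<bar>s i x - g x\<bar> \<partial>M) \<longlonglongrightarrow> (\<integral>x. 0 \<partial>M)"
  proof (rule integral_dominated_convergence[where w="\<lambda>x. 3 * \<bar>g x\<bar>"])
    show "AE x in M. (\<lambda>i. \<bar>s i x - g x\<bar>) \<longlonglongrightarrow> 0"
      using lim by (auto intro!: tendsto_rabs_zero LIM_zero)
    show "AE x in M. norm \<bar>s i x - g x\<bar> \<le> 3 * \<bar>g x\<bar>" for i
    proof (rule AE_I2)
      fix x assume "x \<in> space M"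
      then have "\<bar>s i x\<bar> \<le> 2 * \<bar>g x\<bar>" by (rule bound)
      then show "norm \<bar>s i x - g x\<bar> \<le> 3 * \<bar>g x\<bar>" by simp
    qed
  qed (use s g in auto)
  then show ?thesis by simp
qed

lemma linear_functional_eq_0_of_indicator:
  fixes L :: "('a \<Rightarrow> real) \<Rightarrow> real"
  assumes N: "subalgebra M N"
    and indicator: "\<And>A. A \<in> sets N \<Longrightarrow> emeasure M A < \<infinity> \<Longrightarrow> L (indicator A) = 0"
    and additive: "\<And>f g. integrable M f \<Longrightarrow> integrable M g \<Longrightarrow> L (\<lambda>x. f x + g x) = L f + L g"
    and homogeneous: "\<And>f c. integrable M f \<Longrightarrow> L (\<lambda>x. c * f x) = c * L f"
    and bounded: "\<And>f. integrable M f \<Longrightarrow> \<bar>L f\<bar> \<le> C * (\<integral>x. \<bar>f x\<bar> \<partial>M)"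
    and f: "integrable M f" "f \<in> borel_measurable N"
  shows "L f = 0"
proof -
  have "integrable (restr_to_subalg M N) f"
    by (rule integrable_in_subalg[OF N f(2,1)])
  then show ?thesis
  proof (induction rule: integrable_induct)
    case (base A r)
    then have "A \<in> sets N" "emeasure M A < \<infinity>"
      using N by (auto simp: sets_restr_to_subalg emeasure_restr_to_subalg)
    moreover have "(\<lambda>x. indicator A x *\<^sub>R r) = (\<lambda>x. r * indicator A x)"
      by (simp add: mult.commute)
    ultimately show ?case
      using N homogeneous[of "indicator A" r] indicator by (auto simp: subalgebra_def)
  next
    case (add u v)
    then have "integrable M u" "integrable M v"
      using integrable_from_subalg[OF N] by auto
    then show ?case using add additive by simp
  next
    case (lim g s)
    have s: "integrable M (s i)" for i
      by (rule integrable_from_subalg[OF N lim(1)])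
    have g: "integrable M g"
      by (rule integrable_from_subalg[OF N lim(4)])
    have "(\<lambda>i. \<integral>x. \<bar>s i x - g x\<bar> \<partial>M) \<longlonglongrightarrow> 0"
      using lim(2,3) by (intro integral_abs_diff_tendsto_0[OF s g]) (auto simp: space_restr_to_subalg)
    then have "(\<lambda>i. C * (\<integral>x. \<bar>s i x - g x\<bar> \<partial>M)) \<longlonglongrightarrow> 0"
      by (simp add: tendsto_mult_right_zero)
    moreover have "\<bar>L g\<bar> \<le> C * (\<integral>x. \<bar>s i x - g x\<bar> \<partial>M)" for i
    proof -
      have "L (s i) = L (\<lambda>x. (s i x - g x) + g x)" by simp
      also have "\<dots> = L (\<lambda>x. s i x - g x) + L g" using s g by (intro additive) auto
      finally show ?thesis
        using lim(5)[of i] bounded[of "\<lambda>x. s i x - g x"] s g by auto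
    qed
    ultimately show ?case
      using LIMSEQ_le_const[of _ 0 "\<bar>L g\<bar>"] by force
  qed
qed

lemma abs_set_integral_le_integral_abs:
  fixes f :: "'a \<Rightarrow> real"
  assumes "c \<in> sets M" "integrable M f"
  shows "\<bar>LINT x:c|M. f x\<bar> \<le> (\<integral>x. \<bar>f x\<bar> \<partial>M)"
proof -
  have "\<bar>LINT x:c|M. f x\<bar> \<le> (\<integral>x. \<bar>indicator c x * f x\<bar> \<partial>M)"
    unfolding set_lebesgue_integral_def by simp
  also have "\<dots> \<le> (\<integral>x. \<bar>f x\<bar> \<partial>M)"
    using assms by (intro integral_mono) (auto simp: integrable_real_indicator_mult split: split_indicator)
  finally show ?thesis .
qed

lemma convex_on_abs: "convex_on UNIV (abs :: real \<Rightarrow> real)"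
proof -
  have "convex_on UNIV (\<lambda>x::real. dist 0 x)" by (rule convex_on_dist) simp
  then show ?thesis by (simp add: dist_real_def)
qed

context sigma_finite_subalgebra
begin

lemma integral_abs_real_cond_exp_le:
  assumes "integrable M f"
  shows "(\<integral>x. \<bar>real_cond_exp M F f x\<bar> \<partial>M) \<le> (\<integral>x. \<bar>f x\<bar> \<partial>M)"
proof -
  have "AE x in M. \<bar>real_cond_exp M F f x\<bar> \<le> real_cond_exp M F (\<lambda>x. \<bar>f x\<bar>) x"
    by (rule real_cond_exp_jensens_inequality(2)[where I=UNIV]) (use assms convex_on_abs in auto)
  then have "(\<integral>x. \<bar>real_cond_exp M F f x\<bar> \<partial>M) \<le> (\<integral>x. real_cond_exp M F (\<lambda>x. \<bar>f x\<bar>) x \<partial>M)"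
    by (intro integral_mono_AE) (use assms real_cond_exp_int(1) in auto)
  also have "\<dots> = (\<integral>x. \<bar>f x\<bar> \<partial>M)"
    using real_cond_exp_int(2)[of "\<lambda>x. \<bar>f x\<bar>"] assms by auto
  finally show ?thesis .
qed

lemma set_integral_real_cond_exp_add:
  assumes "c \<in> sets M" "integrable M f" "integrable M g"
  shows "(LINT x:c|M. real_cond_exp M F (\<lambda>x. f x + g x) x)
    = (LINT x:c|M. real_cond_exp M F f x) + (LINT x:c|M. real_cond_exp M F g x)"
proof -
  have "(LINT x:c|M. real_cond_exp M F (\<lambda>x. f x + g x) x)
      = (LINT x:c|M. real_cond_exp M F f x + real_cond_exp M F g x)"
    unfolding set_lebesgue_integral_def
    using real_cond_exp_add[OF assms(2,3)] assms(1) by (intro integral_cong_AE) auto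
  also have "\<dots> = (LINT x:c|M. real_cond_exp M F f x) + (LINT x:c|M. real_cond_exp M F g x)"
    using assms real_cond_exp_int(1)
    by (intro set_integral_add) (auto simp: set_integrable_def integrable_real_indicator_mult)
  finally show ?thesis .
qed

lemma set_integral_real_cond_exp_cmult:
  assumes "c \<in> sets M" "integrable M f"
  shows "(LINT x:c|M. real_cond_exp M F (\<lambda>x. r * f x) x) = r * (LINT x:c|M. real_cond_exp M F f x)"
proof -
  have "(LINT x:c|M. real_cond_exp M F (\<lambda>x. r * f x) x) = (LINT x:c|M. r * real_cond_exp M F f x)"
    unfolding set_lebesgue_integral_def
    using real_cond_exp_cmult[OF assms(2), of r] assms(1) by (intro integral_cong_AE) auto
  then show ?thesis by simp
qed

end

context prob_space
begin

lemma cond_indep_set_integral_Int: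
  assumes G: "subalgebra M G" and FA: "subalgebra M FA" and FB: "subalgebra M FB"
    and ci: "cond_indep M G (sets FA) (sets FB)"
    and a: "a \<in> sets FA" and g: "g \<in> sets G" and b: "b \<in> sets FB"
  shows "(LINT x:g \<inter> b|M. indicator a x :: real) = (LINT x:g \<inter> b|M. real_cond_exp M G (indicator a) x)"
proof -
  interpret G: sigma_finite_subalgebra M G
    by (rule prob_space_subalgebra_is_sigma_finite[OF prob_space_axioms G])
  let ?E = "real_cond_exp M G"
  have sets: "a \<in> sets M" "b \<in> sets M" "g \<in> sets M"
    using a b g FA FB G by (auto simp: subalgebra_def)
  have "(LINT x:g \<inter> b|M. indicator a x) = (\<integral>x. indicator g x * (indicator (a \<inter> b) x :: real) \<partial>M)"
    unfolding set_lebesgue_integral_def by (intro Bochner_Integration.integral_cong) (auto split: split_indicator)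
  also have "\<dots> = (\<integral>x. indicator g x * ?E (indicator (a \<inter> b)) x \<partial>M)"
    using sets g by (intro G.real_cond_exp_intg(2)[symmetric]) (auto intro!: integrable_real_indicator_mult)
  also have "\<dots> = (\<integral>x. (indicator g x * ?E (indicator a) x) * ?E (indicator b) x \<partial>M)"
  proof (rule integral_cong_AE)
    have "AE x in M. ?E (indicator (a \<inter> b)) x = ?E (indicator a) x * ?E (indicator b) x"
      using ci a b unfolding cond_indep_def by blast
    then show "AE x in M. indicator g x * ?E (indicator (a \<inter> b)) x
        = (indicator g x * ?E (indicator a) x) * ?E (indicator b) x"
      by eventually_elim simp
  qed (use sets in auto)
  also have "\<dots> = (\<integral>x. (indicator g x * ?E (indicator a) x) * indicator b x \<partial>M)"
    using sets g G.real_cond_exp_int(1)[of "indicator a"]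
    by (intro G.real_cond_exp_intg(2))
      (auto simp: mult.commute[of _ "indicator b _"] mult.assoc[symmetric] indicator_inter_arith[symmetric]
        intro!: integrable_real_indicator_mult)
  also have "\<dots> = (LINT x:g \<inter> b|M. ?E (indicator a) x)"
    unfolding set_lebesgue_integral_def by (intro Bochner_Integration.integral_cong) (auto split: split_indicator)
  finally show ?thesis .
qed

lemma cond_indep_set_integral_indicator:
  assumes G: "subalgebra M G" and FA: "subalgebra M FA" and FB: "subalgebra M FB"
    and ci: "cond_indep M G (sets FA) (sets FB)"
    and a: "a \<in> sets FA" and c: "c \<in> sets (join_algebra M G FB)"
  shows "(LINT x:c|M. indicator a x :: real) = (LINT x:c|M. real_cond_exp M G (indicator a) x)"
proof -
  interpret G: sigma_finite_subalgebra M G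
    by (rule prob_space_subalgebra_is_sigma_finite[OF prob_space_axioms G])
  have aM: "a \<in> sets M"
    using a FA by (auto simp: subalgebra_def)
  show ?thesis
  proof (rule set_integral_eq_on_sigma_sets[OF Int_stable_join_generators join_generators_sets[OF G FB]])
    show ia: "integrable M (indicator a :: 'a \<Rightarrow> real)"
      using aM by simp
    then show "integrable M (real_cond_exp M G (indicator a))"
      by (rule G.real_cond_exp_int(1))
    show "(\<integral>x. indicator a x \<partial>M) = (\<integral>x. real_cond_exp M G (indicator a) x \<partial>M)"
      using G.real_cond_exp_int(2)[OF ia] by simp
    show "c \<in> sigma_sets (space M) {g \<inter> b | g b. g \<in> sets G \<and> b \<in> sets FB}"
      using c by (simp add: sets_join_algebra[OF G FB])
  qed (use cond_indep_set_integral_Int[OF G FA FB ci a] in blast)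
qed

lemma real_cond_exp_join_cond_indep:
  assumes G: "subalgebra M G" and FA: "subalgebra M FA" and FB: "subalgebra M FB"
    and ci: "cond_indep M G (sets FA) (sets FB)"
    and f: "integrable M f" "f \<in> borel_measurable FA"
  shows "AE x in M. real_cond_exp M (join_algebra M G FB) f x = real_cond_exp M G f x"
proof -
  let ?H = "join_algebra M G FB"
  let ?E = "real_cond_exp M G"
  interpret G: sigma_finite_subalgebra M G
    by (rule prob_space_subalgebra_is_sigma_finite[OF prob_space_axioms G])
  interpret H: sigma_finite_subalgebra M ?H
    by (rule prob_space_subalgebra_is_sigma_finite[OF prob_space_axioms subalgebra_join_algebra[OF G FB]])
  have "(LINT x:c|M. f x) = (LINT x:c|M. ?E f x)" if c: "c \<in> sets ?H" for c
  proof -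
    have cM: "c \<in> sets M"
      using c subalgebra_join_algebra[OF G FB] by (auto simp: subalgebra_def)
    let ?L = "\<lambda>u. (LINT x:c|M. u x) - (LINT x:c|M. ?E u x)"
    have "?L f = 0"
    proof (rule linear_functional_eq_0_of_indicator[OF FA _ _ _ _ f])
      show "?L (indicator A) = 0" if "A \<in> sets FA" for A
        using cond_indep_set_integral_indicator[OF G FA FB ci that c] by simp
      show "?L (\<lambda>x. u x + v x) = ?L u + ?L v" if "integrable M u" "integrable M v" for u v
        using that cM G.set_integral_real_cond_exp_add[OF cM that]
        by (simp add: set_integral_add set_integrable_def integrable_real_indicator_mult)
      show "?L (\<lambda>x. r * u x) = r * ?L u" if "integrable M u" for u r
        using G.set_integral_real_cond_exp_cmult[OF cM that] by (simp add: right_diff_distrib)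
      show "\<bar>?L u\<bar> \<le> 2 * (\<integral>x. \<bar>u x\<bar> \<partial>M)" if u: "integrable M u" for u
      proof -
        have "\<bar>LINT x:c|M. ?E u x\<bar> \<le> (\<integral>x. \<bar>u x\<bar> \<partial>M)"
          using abs_set_integral_le_integral_abs[OF cM G.real_cond_exp_int(1)[OF u]]
            G.integral_abs_real_cond_exp_le[OF u] by linarith
        then show ?thesis
          using abs_set_integral_le_integral_abs[OF cM u] by linarith
      qed
    qed
    then show ?thesis by simp
  qed
  then show ?thesis
    using f G.real_cond_exp_int(1)[OF f(1)] subalgebra_join_algebra_left[OF G FB]
    by (intro H.real_cond_exp_charact) (auto intro: measurable_from_subalg)
qed

end

section \<open>A telescoping moment condition\<close>

lemma telescoping_sum_residual:
  fixes p \<gamma> :: "nat \<Rightarrow> 'a::ab_group_add"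
  assumes "j \<le> l"
  shows "p (Suc l) - (\<Sum>k\<in>{j..l}. \<gamma> k) = p j + (\<Sum>k\<in>{j..l}. p (Suc k) - p k - \<gamma> k)"
  using sum_Suc_diff[of j l p] assms by (simp add: sum_subtractf)

context prob_space
begin

lemma integral_mult_cond_exp_residual_eq_0:
  assumes G: "subalgebra M G" and h: "h \<in> borel_measurable G" "square_integrable M h"
    and D: "square_integrable M D" and \<gamma>: "square_integrable M \<gamma>"
    and E: "AE x in M. real_cond_exp M G D x = \<gamma> x"
  shows "(\<integral>x. h x * (D x - \<gamma> x) \<partial>M) = 0"
proof -
  interpret G: sigma_finite_subalgebra M G
    by (rule prob_space_subalgebra_is_sigma_finite[OF prob_space_axioms G])
  have hD: "integrable M (\<lambda>x. h x * D x)" and h\<gamma>: "integrable M (\<lambda>x. h x * \<gamma> x)"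
    using integrable_mult_square_integrable h D \<gamma> by blast+
  have "(\<integral>x. h x * D x \<partial>M) = (\<integral>x. h x * real_cond_exp M G D x \<partial>M)"
    using hD h D by (intro G.real_cond_exp_intg(2)[symmetric]) (auto simp: square_integrable_def)
  also have "\<dots> = (\<integral>x. h x * \<gamma> x \<partial>M)"
    using E h \<gamma> measurable_from_subalg[OF G h(1)]
    by (intro integral_cong_AE) (auto simp: square_integrable_def)
  finally show ?thesis
    using hD h\<gamma> by (simp add: right_diff_distrib)
qed

lemma integral_indicator_residual_mult_eq_0:
  assumes H: "subalgebra M H" and F: "subalgebra H F"
    and \<phi>: "\<phi> \<in> borel_measurable H" "square_integrable M \<phi>"
    and p: "square_integrable M p" and B: "B \<in> sets F"
    and E: "AE x in M. real_cond_exp M H p x = real_cond_exp M F p x"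
  shows "(\<integral>x. indicator B x * (\<phi> x - real_cond_exp M F \<phi> x) * p x \<partial>M) = 0"
proof -
  have MF: "subalgebra M F"
    by (rule subalgebra_trans[OF H F])
  interpret F: sigma_finite_subalgebra M F
    by (rule prob_space_subalgebra_is_sigma_finite[OF prob_space_axioms MF])
  interpret H: sigma_finite_subalgebra M H
    by (rule prob_space_subalgebra_is_sigma_finite[OF prob_space_axioms H])
  let ?e = "real_cond_exp M F \<phi>" and ?ep = "real_cond_exp M F p"
  have BF: "indicator B \<in> borel_measurable F" and BH: "indicator B \<in> borel_measurable H"
    and BM: "B \<in> sets M"
    using B F MF by (auto simp: subalgebra_def)
  have L2: "square_integrable M ?e" "square_integrable M ?ep"
    using F.square_integrable_real_cond_exp square_integrable_integrable \<phi>(2) p by blast+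
  have int: "integrable M (\<lambda>x. (indicator B x * \<phi> x) * p x)"
    "integrable M (\<lambda>x. (indicator B x * ?ep x) * \<phi> x)"
    "integrable M (\<lambda>x. (indicator B x * ?e x) * p x)"
    using BM L2 \<phi>(2) p by (auto intro!: integrable_mult_square_integrable square_integrable_mult_indicator)
  have "(\<integral>x. (indicator B x * \<phi> x) * p x \<partial>M) = (\<integral>x. (indicator B x * \<phi> x) * real_cond_exp M H p x \<partial>M)"
    using int(1) BH \<phi> p
    by (intro H.real_cond_exp_intg(2)[symmetric]) (auto simp: square_integrable_def intro!: borel_measurable_times)
  also have "\<dots> = (\<integral>x. (indicator B x * ?ep x) * \<phi> x \<partial>M)"
    using E BM \<phi> L2 by (intro integral_cong_AE) (auto simp: square_integrable_def)
  also have "\<dots> = (\<integral>x. (indicator B x * ?ep x) * ?e x \<partial>M)"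
    using int(2) BF \<phi>
    by (intro F.real_cond_exp_intg(2)[symmetric]) (auto simp: square_integrable_def intro!: borel_measurable_times)
  also have "\<dots> = (\<integral>x. (indicator B x * ?e x) * p x \<partial>M)"
    using int(3) BF p
    by (subst F.real_cond_exp_intg(2)[symmetric])
      (auto simp: square_integrable_def mult_ac intro!: borel_measurable_times)
  finally show ?thesis
    using int(1,3) by (simp add: algebra_simps)
qed

context
  fixes Fs FB :: "'a measure" and G :: "nat \<Rightarrow> 'a measure" and \<phi> :: "'a \<Rightarrow> real"
    and p \<gamma> :: "nat \<Rightarrow> 'a \<Rightarrow> real" and j l :: nat
  assumes Fs: "subalgebra M Fs" and FB: "subalgebra M FB"
    and G: "\<And>k. k \<in> {j..l} \<Longrightarrow> subalgebra M (G k)" "\<And>k. k \<in> {j..l} \<Longrightarrow> subalgebra (G k) Fs"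
    and \<phi>: "\<And>k. k \<in> {j..l} \<Longrightarrow> \<phi> \<in> borel_measurable (G k)"
      "\<phi> \<in> borel_measurable (join_algebra M Fs FB)" "square_integrable M \<phi>"
    and p: "\<And>k. k \<in> {j..Suc l} \<Longrightarrow> square_integrable M (p k)"
    and \<gamma>: "\<And>k. k \<in> {j..l} \<Longrightarrow> square_integrable M (\<gamma> k)"
    and blip: "\<And>k. k \<in> {j..l} \<Longrightarrow>
      AE x in M. real_cond_exp M (G k) (\<lambda>x. p (Suc k) x - p k x) x = \<gamma> k x"
    and exogeneity: "AE x in M. real_cond_exp M (join_algebra M Fs FB) (p j) x = real_cond_exp M Fs (p j) x"
    and jl: "j \<le> l"
begin

lemma square_integrable_residual: "square_integrable M (\<lambda>x. \<phi> x - real_cond_exp M Fs \<phi> x)"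
proof -
  interpret Fs: sigma_finite_subalgebra M Fs
    by (rule prob_space_subalgebra_is_sigma_finite[OF prob_space_axioms Fs])
  show ?thesis
    using \<phi>(3) by (intro square_integrable_diff Fs.square_integrable_real_cond_exp square_integrable_integrable)
qed

lemma set_integral_residual_moment_eq_0:
  assumes B: "B \<in> sets Fs"
  shows "(LINT x:B|M. (p (Suc l) x - (\<Sum>k\<in>{j..l}. \<gamma> k x)) * (\<phi> x - real_cond_exp M Fs \<phi> x)) = 0"
proof -
  define h where "h x = indicator B x * (\<phi> x - real_cond_exp M Fs \<phi> x)" for x
  define \<Delta> where "\<Delta> k x = p (Suc k) x - p k x - \<gamma> k x" for k x
  have h: "square_integrable M h"
    unfolding h_def using B Fs square_integrable_residual
    by (intro square_integrable_mult_indicator) (auto simp: subalgebra_def)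
  have h_G: "h \<in> borel_measurable (G k)" if k: "k \<in> {j..l}" for k
  proof -
    have "B \<in> sets (G k)" "real_cond_exp M Fs \<phi> \<in> borel_measurable (G k)"
      using B G(2)[OF k] measurable_from_subalg[OF G(2)[OF k] borel_measurable_cond_exp]
      by (auto simp: subalgebra_def)
    then show ?thesis unfolding h_def using \<phi>(1)[OF k] by measurable
  qed
  have \<Delta>: "square_integrable M (\<Delta> k)" if "k \<in> {j..l}" for k
    unfolding \<Delta>_def using that jl by (intro square_integrable_diff p \<gamma>) auto
  have "(\<integral>x. h x * p j x \<partial>M) = 0"
    using integral_indicator_residual_mult_eq_0[OF subalgebra_join_algebra[OF Fs FB]
        subalgebra_join_algebra_left[OF Fs FB] \<phi>(2,3) p B exogeneity] jl
    unfolding h_def by (simp add: mult.assoc)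
  moreover have "(\<integral>x. h x * \<Delta> k x \<partial>M) = 0" if k: "k \<in> {j..l}" for k
    using integral_mult_cond_exp_residual_eq_0[OF G(1)[OF k] h_G[OF k] h _ \<gamma>[OF k] blip[OF k]] p k jl
    unfolding \<Delta>_def by (simp add: square_integrable_diff diff_diff_eq)
  moreover have int_p: "integrable M (\<lambda>x. h x * p j x)"
    and int_\<Delta>: "\<And>k. k \<in> {j..l} \<Longrightarrow> integrable M (\<lambda>x. h x * \<Delta> k x)"
    using integrable_mult_square_integrable[OF h] p \<Delta> jl by auto
  ultimately have "(\<integral>x. h x * p j x + (\<Sum>k\<in>{j..l}. h x * \<Delta> k x) \<partial>M) = 0"
    using Bochner_Integration.integral_add[OF int_p Bochner_Integration.integrable_sum[of "{j..l}"]]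
      Bochner_Integration.integral_sum[of "{j..l}"] by simp
  moreover have "p (Suc l) x - (\<Sum>k\<in>{j..l}. \<gamma> k x) = p j x + (\<Sum>k\<in>{j..l}. \<Delta> k x)" for x
    unfolding \<Delta>_def by (rule telescoping_sum_residual[OF jl])
  ultimately show ?thesis
    unfolding set_lebesgue_integral_def h_def by (simp add: algebra_simps sum_distrib_left)
qed

lemma telescoping_moment_condition:
  assumes Fp: "subalgebra Fs Fp"
  shows "AE x in M. real_cond_exp M Fp
    (\<lambda>x. (p (Suc l) x - (\<Sum>k\<in>{j..l}. \<gamma> k x)) * (\<phi> x - real_cond_exp M Fs \<phi> x)) x = 0"
proof -
  interpret Fp: sigma_finite_subalgebra M Fp
    by (rule prob_space_subalgebra_is_sigma_finite[OF prob_space_axioms subalgebra_trans[OF Fs Fp]])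
  have "square_integrable M (\<lambda>x. p (Suc l) x - (\<Sum>k\<in>{j..l}. \<gamma> k x))"
    using jl by (intro square_integrable_diff square_integrable_sum p \<gamma>) auto
  from integrable_mult_square_integrable[OF this square_integrable_residual]
  show ?thesis
    using Fp set_integral_residual_moment_eq_0 by (intro Fp.real_cond_exp_charact) (auto simp: subalgebra_def)
qed

end

end

section \<open>Histories of sequentially collected episodes\<close>

lemma subalgebra_hist_mono:
  assumes "IX \<subseteq> IX'" "IT \<subseteq> IT'" "Iy \<subseteq> Iy'"
  shows "subalgebra (hist M SX ST X T y IX' IT' Iy') (hist M SX ST X T y IX IT Iy)"
  unfolding hist_def by (rule subalgebra_sigma_mono) (use assms in \<open>intro Un_mono; blast\<close>, auto)

lemma measurable_hist_X:
  "(i, k) \<in> IX \<Longrightarrow> X i k \<in> M \<rightarrow>\<^sub>M SX \<Longrightarrow> X i k \<in> hist M SX ST X T y IX IT Iy \<rightarrow>\<^sub>M SX"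
  unfolding hist_def by (rule measurable_sigma_vimages) auto

lemma measurable_hist_T:
  "(i, k) \<in> IT \<Longrightarrow> T i k \<in> M \<rightarrow>\<^sub>M ST \<Longrightarrow> T i k \<in> hist M SX ST X T y IX IT Iy \<rightarrow>\<^sub>M ST"
  unfolding hist_def by (rule measurable_sigma_vimages) auto

lemma subalgebra_Fst_Fep: "subalgebra (Fst M SX ST X T y l i j) (Fep M SX ST X T y l i)"
  unfolding Fst_def Fep_def by (rule subalgebra_hist_mono) auto

lemma subalgebra_Gst_Fst: "j \<le> k \<Longrightarrow> subalgebra (Gst M SX ST X T y l i k) (Fst M SX ST X T y l i j)"
  unfolding Gst_def Fst_def by (rule subalgebra_hist_mono) auto

lemma measurable_phiv:
  assumes \<phi>: "(\<lambda>(x, tau). \<phi> j x tau) \<in> borel_measurable (PiM {1..j} (\<lambda>_. SX) \<Otimes>\<^sub>M PiM {1..j} (\<lambda>_. ST))"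
    and X: "\<And>k. k \<in> {1..j} \<Longrightarrow> X k \<in> N \<rightarrow>\<^sub>M SX"
    and T: "\<And>k. k \<in> {1..j} \<Longrightarrow> T k \<in> N \<rightarrow>\<^sub>M ST"
  shows "(\<lambda>\<omega>. phiv \<phi> j (\<lambda>k. X k \<omega>) (\<lambda>k. T k \<omega>)) \<in> borel_measurable N"
proof -
  have "(\<lambda>\<omega>. (restrict (\<lambda>k. X k \<omega>) {1..j}, restrict (\<lambda>k. T k \<omega>) {1..j}))
      \<in> N \<rightarrow>\<^sub>M PiM {1..j} (\<lambda>_. SX) \<Otimes>\<^sub>M PiM {1..j} (\<lambda>_. ST)"
    using X T by (intro measurable_Pair measurable_restrict) auto
  from measurable_compose[OF this \<phi>] show ?thesis
    by (simp add: phiv_def)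
qed

lemma obs_eq_pot: "obs l Y T i = pot l Y T i (Suc l) tau"
proof -
  have "restrict (splice (Suc l) t tau) {1..l} = restrict t {1..l}" for t
    by (auto simp: splice_def)
  then show ?thesis by (simp add: obs_def pot_def)
qed

locale sequential_episodes = prob_space M for M :: "'a measure" +
  fixes SX :: "'x measure" and ST :: "'t measure"
    and X :: "nat \<Rightarrow> nat \<Rightarrow> 'a \<Rightarrow> 'x" and T :: "nat \<Rightarrow> nat \<Rightarrow> 'a \<Rightarrow> 't"
    and Y :: "nat \<Rightarrow> (nat \<Rightarrow> 't) \<Rightarrow> 'a \<Rightarrow> real" and n l :: nat
  assumes X_meas: "\<And>i k. i \<in> {1..n} \<Longrightarrow> k \<in> {1..l} \<Longrightarrow> X i k \<in> M \<rightarrow>\<^sub>M SX"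
    and T_meas: "\<And>i k. i \<in> {1..n} \<Longrightarrow> k \<in> {1..l} \<Longrightarrow> T i k \<in> M \<rightarrow>\<^sub>M ST"
    and Y_meas: "\<And>i. i \<in> {1..n} \<Longrightarrow>
      (\<lambda>(tau, \<omega>). Y i tau \<omega>) \<in> borel_measurable (PiM {1..l} (\<lambda>_. ST) \<Otimes>\<^sub>M M)"
begin

lemma measurable_outcome:
  assumes i: "i \<in> {1..n}" and s: "\<And>k. k \<in> {1..l} \<Longrightarrow> s k \<in> M \<rightarrow>\<^sub>M ST"
  shows "(\<lambda>\<omega>. Y i (restrict (\<lambda>k. s k \<omega>) {1..l}) \<omega>) \<in> borel_measurable M"
proof -
  have "(\<lambda>\<omega>. (restrict (\<lambda>k. s k \<omega>) {1..l}, \<omega>)) \<in> M \<rightarrow>\<^sub>M PiM {1..l} (\<lambda>_. ST) \<Otimes>\<^sub>M M"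
    using s by (intro measurable_Pair measurable_restrict measurable_ident_sets) auto
  from measurable_compose[OF this Y_meas[OF i]] show ?thesis
    by simp
qed

lemma measurable_obs: "i \<in> {1..n} \<Longrightarrow> obs l Y T i \<in> borel_measurable M"
  unfolding obs_def by (rule measurable_outcome) (use T_meas in auto)

lemma measurable_pot:
  assumes i: "i \<in> {1..n}" and tau: "tau \<in> UNIV \<rightarrow> space ST"
  shows "pot l Y T i j tau \<in> borel_measurable M"
  unfolding pot_def
proof (rule measurable_outcome[OF i])
  show "(\<lambda>\<omega>. splice j (\<lambda>k. T i k \<omega>) tau k) \<in> M \<rightarrow>\<^sub>M ST" if "k \<in> {1..l}" for k
    using T_meas[OF i that] tau by (cases "k < j") (auto simp: splice_def intro!: measurable_const)
qed

lemma subalgebra_hist_episode: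
  assumes i: "i \<in> {1..n}"
    and I: "IX \<subseteq> past_idx l i \<union> {(i, k) | k. k \<in> {1..l}}" "IT \<subseteq> past_idx l i \<union> {(i, k) | k. k \<in> {1..l}}"
  shows "subalgebra M (hist M SX ST X T (obs l Y T) IX IT {1..<i})"
  unfolding hist_def
proof (rule subalgebra_sigma, safe)
  fix i' k A assume "(i', k) \<in> IX" "A \<in> sets SX"
  then show "X i' k -` A \<inter> space M \<in> sets M"
    using I(1) i by (auto simp: past_idx_def intro!: measurable_sets[OF X_meas])
next
  fix i' k A assume "(i', k) \<in> IT" "A \<in> sets ST"
  then show "T i' k -` A \<inter> space M \<in> sets M"
    using I(2) i by (auto simp: past_idx_def intro!: measurable_sets[OF T_meas])
next
  fix i' and A :: "real set" assume "i' \<in> {1..<i}" "A \<in> sets borel"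
  then show "obs l Y T i' -` A \<inter> space M \<in> sets M"
    using i by (auto intro!: measurable_sets[OF measurable_obs])
qed

lemma subalgebra_Fst: "i \<in> {1..n} \<Longrightarrow> j \<le> l \<Longrightarrow> subalgebra M (Fst M SX ST X T (obs l Y T) l i j)"
  unfolding Fst_def by (rule subalgebra_hist_episode) auto

lemma subalgebra_Gst: "i \<in> {1..n} \<Longrightarrow> j \<le> l \<Longrightarrow> subalgebra M (Gst M SX ST X T (obs l Y T) l i j)"
  unfolding Gst_def by (rule subalgebra_hist_episode) auto

abbreviation treatment_algebra :: "nat \<Rightarrow> nat \<Rightarrow> 'a measure" where
  "treatment_algebra i j \<equiv> sigma (space M) {T i j -` C \<inter> space M | C. C \<in> sets ST}"

lemma subalgebra_treatment_algebra:
  "i \<in> {1..n} \<Longrightarrow> j \<in> {1..l} \<Longrightarrow> subalgebra M (treatment_algebra i j)"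
  by (rule subalgebra_sigma) (auto intro: measurable_sets[OF T_meas])

lemma measurable_phiv_episode:
  assumes "i \<in> {1..n}" "j \<in> {1..l}"
    and \<phi>: "(\<lambda>(x, tau). \<phi> j x tau) \<in> borel_measurable (PiM {1..j} (\<lambda>_. SX) \<Otimes>\<^sub>M PiM {1..j} (\<lambda>_. ST))"
  shows "(\<lambda>\<omega>. phiv \<phi> j (\<lambda>k. X i k \<omega>) (\<lambda>k. T i k \<omega>)) \<in> borel_measurable M"
  using assms by (intro measurable_phiv[where \<phi> = \<phi> and j = j, OF \<phi>] X_meas T_meas) auto

lemma measurable_phiv_Gst:
  assumes i: "i \<in> {1..n}" and j: "j \<in> {1..l}" and k: "k \<in> {j..l}"
    and \<phi>: "(\<lambda>(x, tau). \<phi> j x tau) \<in> borel_measurable (PiM {1..j} (\<lambda>_. SX) \<Otimes>\<^sub>M PiM {1..j} (\<lambda>_. ST))"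
  shows "(\<lambda>\<omega>. phiv \<phi> j (\<lambda>k. X i k \<omega>) (\<lambda>k. T i k \<omega>)) \<in> borel_measurable (Gst M SX ST X T (obs l Y T) l i k)"
  unfolding Gst_def using i j k
  by (intro measurable_phiv[where \<phi> = \<phi> and j = j, OF \<phi>] measurable_hist_X measurable_hist_T X_meas T_meas) auto

lemma measurable_phiv_join_treatment:
  assumes i: "i \<in> {1..n}" and j: "j \<in> {1..l}"
    and \<phi>: "(\<lambda>(x, tau). \<phi> j x tau) \<in> borel_measurable (PiM {1..j} (\<lambda>_. SX) \<Otimes>\<^sub>M PiM {1..j} (\<lambda>_. ST))"
  shows "(\<lambda>\<omega>. phiv \<phi> j (\<lambda>k. X i k \<omega>) (\<lambda>k. T i k \<omega>))
    \<in> borel_measurable (join_algebra M (Fst M SX ST X T (obs l Y T) l i j) (treatment_algebra i j))"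
proof (rule measurable_phiv[where \<phi> = \<phi> and j = j, OF \<phi>])
  let ?Fs = "Fst M SX ST X T (obs l Y T) l i j"
  have MFs: "subalgebra M ?Fs"
    using subalgebra_Fst[OF i] j by simp
  note Fs = subalgebra_join_algebra_left[OF MFs subalgebra_treatment_algebra[OF i j]]
    and FB = subalgebra_join_algebra_right[OF MFs subalgebra_treatment_algebra[OF i j]]
  fix k assume k: "k \<in> {1..j}"
  have "X i k \<in> ?Fs \<rightarrow>\<^sub>M SX"
    unfolding Fst_def using i j k by (intro measurable_hist_X X_meas) auto
  then show "X i k \<in> join_algebra M ?Fs (treatment_algebra i j) \<rightarrow>\<^sub>M SX"
    by (rule measurable_from_subalg[OF Fs])
  show "T i k \<in> join_algebra M ?Fs (treatment_algebra i j) \<rightarrow>\<^sub>M ST"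
  proof (cases "k < j")
    case True
    then have "T i k \<in> ?Fs \<rightarrow>\<^sub>M ST"
      unfolding Fst_def using i j k by (intro measurable_hist_T T_meas) auto
    then show ?thesis by (rule measurable_from_subalg[OF Fs])
  next
    case False
    then have "T i k \<in> treatment_algebra i j \<rightarrow>\<^sub>M ST"
      using i j k by (intro measurable_sigma_vimages T_meas) auto
    then show ?thesis by (rule measurable_from_subalg[OF FB])
  qed
qed

lemma real_cond_exp_pot_exogenous:
  assumes i: "i \<in> {1..n}" and j: "j \<in> {1..l}" and tau: "tau \<in> UNIV \<rightarrow> space ST"
    and L2: "integrable M (\<lambda>\<omega>. (pot l Y T i j tau \<omega>)\<^sup>2)"
    and A1: "cond_indep M (Fst M SX ST X T (obs l Y T) l i j)
      (sets (sigma (space M) {pot l Y T i j tau' -` B \<inter> space M | tau' B.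
          tau' \<in> UNIV \<rightarrow> space ST \<and> B \<in> sets (borel :: real measure)}))
      (sets (treatment_algebra i j))"
  shows "AE \<omega> in M. real_cond_exp M (join_algebra M (Fst M SX ST X T (obs l Y T) l i j) (treatment_algebra i j))
      (pot l Y T i j tau) \<omega> = real_cond_exp M (Fst M SX ST X T (obs l Y T) l i j) (pot l Y T i j tau) \<omega>"
proof (rule real_cond_exp_join_cond_indep[OF subalgebra_Fst _ subalgebra_treatment_algebra[OF i j] A1])
  show "integrable M (pot l Y T i j tau)"
    using measurable_pot[OF i tau] L2 by (intro square_integrable_integrable) (simp add: square_integrable_def)
  show "subalgebra M (sigma (space M) {pot l Y T i j tau' -` B \<inter> space M | tau' B.
      tau' \<in> UNIV \<rightarrow> space ST \<and> B \<in> sets (borel :: real measure)})"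
    using i by (intro subalgebra_sigma) (auto intro: measurable_sets[OF measurable_pot])
  show "pot l Y T i j tau \<in> borel_measurable (sigma (space M) {pot l Y T i j tau' -` B \<inter> space M | tau' B.
      tau' \<in> UNIV \<rightarrow> space ST \<and> B \<in> sets (borel :: real measure)})"
    using i tau by (intro measurable_sigma_vimages measurable_pot) auto
qed (use i j in auto)

end

theorem lemma2:
  fixes M :: "'a measure" and SX :: "'x measure" and ST :: "'t measure" and PX :: "'x measure"
    and X :: "nat \<Rightarrow> nat \<Rightarrow> 'a \<Rightarrow> 'x" and T :: "nat \<Rightarrow> nat \<Rightarrow> 'a \<Rightarrow> 't"
    and Y :: "nat \<Rightarrow> (nat \<Rightarrow> 't) \<Rightarrow> 'a \<Rightarrow> real"
    and \<phi> :: "nat \<Rightarrow> (nat \<Rightarrow> 'x) \<Rightarrow> (nat \<Rightarrow> 't) \<Rightarrow> real ^ 'd"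
    and \<theta> :: "nat \<Rightarrow> real ^ 'd"
    and t0 :: 't and n l i j :: nat
  assumes P: "prob_space M"
    and t0: "t0 \<in> space ST"
    and X_meas: "\<And>i k. i \<in> {1..n} \<Longrightarrow> k \<in> {1..l} \<Longrightarrow> X i k \<in> M \<rightarrow>\<^sub>M SX"
    and T_meas: "\<And>i k. i \<in> {1..n} \<Longrightarrow> k \<in> {1..l} \<Longrightarrow> T i k \<in> M \<rightarrow>\<^sub>M ST"
    and Y_meas: "\<And>i. i \<in> {1..n} \<Longrightarrow>
        (\<lambda>(tau, \<omega>). Y i tau \<omega>) \<in> borel_measurable (PiM {1..l} (\<lambda>_. ST) \<Otimes>\<^sub>M M)"
    and phi_meas: "\<And>j. j \<in> {1..l} \<Longrightarrow>
        (\<lambda>(x, tau). \<phi> j x tau) \<in> borel_measurable (PiM {1..j} (\<lambda>_. SX) \<Otimes>\<^sub>M PiM {1..j} (\<lambda>_. ST))"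
    and Y_L2: "\<And>i j tau. i \<in> {1..n} \<Longrightarrow> j \<in> {1..Suc l} \<Longrightarrow> tau \<in> UNIV \<rightarrow> space ST \<Longrightarrow>
        integrable M (\<lambda>\<omega>. (pot l Y T i j tau \<omega>)\<^sup>2)"
    and phi_L2: "\<And>i j c. i \<in> {1..n} \<Longrightarrow> j \<in> {1..l} \<Longrightarrow>
        integrable M (\<lambda>\<omega>. (phiv \<phi> j (\<lambda>k. X i k \<omega>) (\<lambda>k. T i k \<omega>) $ c)\<^sup>2)"
    and PX: "prob_space PX" "sets PX = sets SX"
    and X1_iid: "\<And>i A B. i \<in> {1..n} \<Longrightarrow> A \<in> sets SX \<Longrightarrow> B \<in> sets (Fep M SX ST X T (obs l Y T) l i) \<Longrightarrow>
        measure M (X i 1 -` A \<inter> space M \<inter> B) = measure PX A * measure M B"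
    and A1: "\<And>i j. i \<in> {1..n} \<Longrightarrow> j \<in> {1..l} \<Longrightarrow>
        cond_indep M (Fst M SX ST X T (obs l Y T) l i j)
          (sets (sigma (space M) {pot l Y T i j tau -` B \<inter> space M | tau B.
                   tau \<in> UNIV \<rightarrow> space ST \<and> B \<in> sets (borel :: real measure)}))
          (sets (sigma (space M) {T i j -` C \<inter> space M | C. C \<in> sets ST}))"
    and A2_phi0: "\<And>j x tau. j \<in> {1..l} \<Longrightarrow> phiv \<phi> j x (tau(j := t0)) = 0"
    and A2: "\<And>i j. i \<in> {1..n} \<Longrightarrow> j \<in> {1..l} \<Longrightarrow>
        AE \<omega> in M. real_cond_exp M (Gst M SX ST X T (obs l Y T) l i j)
            (\<lambda>\<omega>. pot l Y T i (Suc j) (\<lambda>_. t0) \<omega> - pot l Y T i j (\<lambda>_. t0) \<omega>) \<omega>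
          = \<theta> j \<bullet> phiv \<phi> j (\<lambda>k. X i k \<omega>) (\<lambda>k. T i k \<omega>)"
    and i: "i \<in> {1..n}" and j: "j \<in> {1..l}"
  shows "\<forall>c. AE \<omega> in M.
     real_cond_exp M (Fep M SX ST X T (obs l Y T) l i)
       (\<lambda>\<omega>. (obs l Y T i \<omega>
              - (\<Sum>j'\<in>{j..l}. \<theta> j' \<bullet> phiv \<phi> j' (\<lambda>k. X i k \<omega>) (\<lambda>k. T i k \<omega>)))
            * (phiv \<phi> j (\<lambda>k. X i k \<omega>) (\<lambda>k. T i k \<omega>) $ c
               - real_cond_exp M (Fst M SX ST X T (obs l Y T) l i j)
                   (\<lambda>\<omega>. phiv \<phi> j (\<lambda>k. X i k \<omega>) (\<lambda>k. T i k \<omega>) $ c) \<omega>)) \<omega> = 0"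
proof -
  interpret sequential_episodes M SX ST X T Y n l
    by (intro sequential_episodes.intro sequential_episodes_axioms.intro P X_meas T_meas Y_meas)
  let ?Fs = "Fst M SX ST X T (obs l Y T) l i j"
  let ?\<phi> = "\<lambda>k \<omega>. phiv \<phi> k (\<lambda>k. X i k \<omega>) (\<lambda>k. T i k \<omega>)"
  have t0: "(\<lambda>_. t0) \<in> UNIV \<rightarrow> space ST"
    using t0 by simp
  have \<phi>_L2: "square_integrable M (\<lambda>\<omega>. ?\<phi> k \<omega> $ c)" if k: "k \<in> {1..l}" for k c
    using i k phi_L2 phi_meas
    by (auto simp: square_integrable_def intro!: measurable_compose[OF measurable_phiv_episode borel_measurable_nth])
  have "AE \<omega> in M. real_cond_exp M (Fep M SX ST X T (obs l Y T) l i)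
      (\<lambda>\<omega>. (pot l Y T i (Suc l) (\<lambda>_. t0) \<omega> - (\<Sum>k\<in>{j..l}. \<theta> k \<bullet> ?\<phi> k \<omega>))
        * (?\<phi> j \<omega> $ c - real_cond_exp M ?Fs (\<lambda>\<omega>. ?\<phi> j \<omega> $ c) \<omega>)) \<omega> = 0" for c
  proof (rule telescoping_moment_condition[where G = "Gst M SX ST X T (obs l Y T) l i" and FB = "treatment_algebra i j"])
    show "square_integrable M (\<lambda>\<omega>. \<theta> k \<bullet> ?\<phi> k \<omega>)" if "k \<in> {j..l}" for k
      using that j by (intro square_integrable_inner \<phi>_L2) auto
  qed (use i j t0 A1 A2 Y_L2 \<phi>_L2 phi_meas in \<open>auto intro!: subalgebra_Fst subalgebra_Fst_Fep subalgebra_Gst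
      subalgebra_Gst_Fst subalgebra_treatment_algebra real_cond_exp_pot_exogenous measurable_pot
      measurable_compose[OF measurable_phiv_Gst borel_measurable_nth]
      measurable_compose[OF measurable_phiv_join_treatment borel_measurable_nth]
      simp: square_integrable_def\<close>)
  then show ?thesis
    unfolding obs_eq_pot[of l Y T i "\<lambda>_. t0"] by blast
qed

end
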